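(* Let $A[1..n]$, $n\ge2$, be a uniformly random permutation of $n$ distinct keys, and apply Yaroslavskiy's partitioning procedure (described in the context) to $A[1..n]$, returning $(i_p,i_q)$. Then, conditional on $(i_p,i_q)$, the three subarrays $A[1..i_p-1]$, $A[i_p+1..i_q-1]$ and $A[i_q+1..n]$ after partitioning are, in terms of relative order of their entries, independent uniformly random permutations of their respective sizes.
   Context: Yaroslavskiy's partitioning of $A[\ell_0..r_0]$: compare $A[\ell_0]>A[r_0]$; let $p$ be the smaller and $q$ the larger of these two keys. Set $\ell\gets\ell_0+1$, $g\gets r_0-1$, $k\gets\ell$. While $k\le g$: if $A[k]<p$, swap $A[k],A[\ell]$ and $\ell\gets\ell+1$; else, if $A[k]\ge q$: while ($A[g]>q$ and $k<g$) do $g\gets g-1$; then if $A[g]\ge p$ swap $A[k],A[g]$, else swap $A[k],A[g]$, swap $A[k],A[\ell]$ and $\ell\gets\ell+1$; then $g\gets g-1$. After these cases, $k\gets k+1$. After the loop: $\ell\gets\ell-1$, $g\gets g+1$, $A[\ell_0]\gets A[\ell]$, $A[\ell]\gets p$, $A[r_0]\gets A[g]$, $A[g]\gets q$; return $(\ell,g)$. After partitioning, entries of $A[\ell_0..\ell-1]$ are $<p$, entries of $A[\ell+1..g-1]$ lie strictly between $p$ and $q$, entries of $A[g+1..r_0]$ are $>q$. *)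

theory Defs
  imports "HOL-Probability.Probability" "HOL-Combinatorics.Multiset_Permutations"
begin

text \<open>Arrays are modelled as functions from (1-based) indices to keys.\<close>

definition aswap :: "(nat \<Rightarrow> 'a) \<Rightarrow> nat \<Rightarrow> nat \<Rightarrow> (nat \<Rightarrow> 'a)" where
  "aswap A i j = A(i := A j, j := A i)"

function dec_g :: "(nat \<Rightarrow> 'a::linorder) \<Rightarrow> 'a \<Rightarrow> nat \<Rightarrow> nat \<Rightarrow> nat" where
  "dec_g A q k g = (if A g > q \<and> k < g then dec_g A q k (g - 1) else g)"
  by auto
termination by (relation "Wellfounded.measure (\<lambda>(A, q, k, g). g)") auto

declare dec_g.simps[simp del]

lemma dec_g_le: "dec_g A q k g \<le> g"
  by (induction A q k g rule: dec_g.induct) (subst dec_g.simps, auto)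

function yloop :: "(nat \<Rightarrow> 'a::linorder) \<Rightarrow> 'a \<Rightarrow> 'a \<Rightarrow> nat \<Rightarrow> nat \<Rightarrow> nat
    \<Rightarrow> (nat \<Rightarrow> 'a) \<times> nat \<times> nat" where
  "yloop A p q l g k =
    (if k \<le> g then
       (if A k < p then yloop (aswap A k l) p q (l + 1) g (k + 1)
        else if A k \<ge> q then
          (let g' = dec_g A q k g in
           if A g' \<ge> p then yloop (aswap A k g') p q l (g' - 1) (k + 1)
           else yloop (aswap (aswap A k g') k l) p q (l + 1) (g' - 1) (k + 1))
        else yloop A p q l g (k + 1))
     else (A, l, g))"
  by pat_completeness auto
termination
proof (relation "Wellfounded.measure (\<lambda>(A, p, q, l, g, k). Suc g - k)", goal_cases)
  case (3 A p q l g k x)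
  then show ?case using dec_g_le[of A q k g] by auto
next
  case (4 A p q l g k x)
  then show ?case using dec_g_le[of A q k g] by auto
qed auto

declare yloop.simps[simp del]

definition ypartition :: "(nat \<Rightarrow> 'a::linorder) \<Rightarrow> nat \<Rightarrow> nat \<Rightarrow> (nat \<Rightarrow> 'a) \<times> nat \<times> nat" where
  "ypartition A l0 r0 =
    (let p = (if A l0 > A r0 then A r0 else A l0);
         q = (if A l0 > A r0 then A l0 else A r0);
         (B, l, g) = yloop A p q (l0 + 1) (r0 - 1) (l0 + 1);
         l = l - 1; g = g + 1;
         B1 = B(l0 := B l);
         B2 = B1(l := p);
         B3 = B2(r0 := B2 g);
         B4 = B3(g := q)
     in (B4, l, g))"

definition ypart_list :: "'a::linorder list \<Rightarrow> 'a list \<times> nat \<times> nat" where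
  "ypart_list xs =
    (let n = length xs; (B, ip, iq) = ypartition (\<lambda>i. xs ! (i - 1)) 1 n
     in (map B [1..<n + 1], ip, iq))"

definition rel_order :: "'a::linorder list \<Rightarrow> nat list" where
  "rel_order xs = map (\<lambda>x. card {y \<in> set xs. y < x}) xs"

text \<open>The three subarrays A[1..ip-1], A[ip+1..iq-1], A[iq+1..n] (1-based) as lists.\<close>
definition subarrays :: "'a list \<Rightarrow> nat \<Rightarrow> nat \<Rightarrow> 'a list \<times> 'a list \<times> 'a list" where
  "subarrays ys ip iq = (take (ip - 1) ys, drop ip (take (iq - 1) ys), drop iq ys)"

end

theory Submission
  imports Defs
begin

(* Fix the final pivot positions (ip, iq).  Conditioned on them, the input is uniform on the
   "fibre" of arrangements of K that lead to these positions.  We show that the map sending an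
   arrangement to its "pattern", the relative orders of the three subarrays, has fibres of equal
   size over the whole space of triples of permutations; hence the pattern is uniformly
   distributed, which is the claim. *)

section \<open>Relative orders\<close>

definition key_rank :: "'a::linorder set \<Rightarrow> 'a \<Rightarrow> nat" where
  "key_rank X x = card {y \<in> X. y < x}"

lemma key_rank_bij:
  assumes "finite X"
  shows "bij_betw (key_rank X) X {0..<card X}"
proof -
  have mono: "key_rank X x < key_rank X y" if "x \<in> X" "y \<in> X" "x < y" for x y
  proof -
    have "{z \<in> X. z < x} \<subset> {z \<in> X. z < y}" using that by auto
    then show ?thesis unfolding key_rank_def by (intro psubset_card_mono) (use assms in auto)
  qed
  have inj: "inj_on (key_rank X) X"
  proof (rule inj_onI)
    fix x y assume "x \<in> X" "y \<in> X" "key_rank X x = key_rank X y"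
    then show "x = y" using mono[of x y] mono[of y x] by (cases x y rule: linorder_cases) auto
  qed
  have "key_rank X ` X \<subseteq> {0..<card X}"
  proof
    fix r assume "r \<in> key_rank X ` X"
    then obtain x where x: "x \<in> X" "r = key_rank X x" by auto
    have "{y \<in> X. y < x} \<subset> X" using x by auto
    then show "r \<in> {0..<card X}" unfolding x key_rank_def using assms by (auto intro: psubset_card_mono)
  qed
  moreover have "card (key_rank X ` X) = card {0..<card X}" using card_image[OF inj] by simp
  ultimately have "key_rank X ` X = {0..<card X}" by (intro card_subset_eq) auto
  then show ?thesis using inj unfolding bij_betw_def by auto
qed

lemma rel_order_key_rank: "rel_order xs = map (key_rank (set xs)) xs"
  unfolding rel_order_def key_rank_def by simp

lemma rel_order_bij:
  assumes "finite X"
  shows "bij_betw rel_order (permutations_of_set X) (permutations_of_set {0..<card X})"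
proof -
  have bij: "bij_betw (key_rank X) X {0..<card X}" by (rule key_rank_bij[OF assms])
  have "bij_betw (map (key_rank X)) (permutations_of_set X) (permutations_of_set {0..<card X})"
  proof (rule bij_betw_imageI)
    show "inj_on (map (key_rank X)) (permutations_of_set X)"
      using bij_betw_imp_inj_on[OF bij] assms by (intro inj_on_mapI) simp
    show "map (key_rank X) ` permutations_of_set X = permutations_of_set {0..<card X}"
      using permutations_of_set_image_inj[OF bij_betw_imp_inj_on[OF bij]] bij
      by (simp add: bij_betw_def)
  qed
  then show ?thesis
    by (rule bij_betw_cong[THEN iffD1, rotated])
      (auto simp: rel_order_key_rank permutations_of_set_def)
qed

lemma rel_order_permutation: "distinct a \<Longrightarrow> rel_order a \<in> permutations_of_set {0..<length a}"
  using bij_betw_apply[OF rel_order_bij[of "set a"], of a] by (simp add: distinct_card permutations_of_set_def)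

lemma relabel_to_pattern:
  assumes X: "finite X" and a: "a \<in> permutations_of_set X"
    and \<alpha>: "\<alpha> \<in> permutations_of_set {0..<card X}"
  shows "\<exists>\<sigma>. \<sigma> permutes X \<and> rel_order (map \<sigma> a) = \<alpha>"
proof -
  obtain b where b: "b \<in> permutations_of_set X" "rel_order b = \<alpha>"
    using \<alpha> bij_betw_imp_surj_on[OF rel_order_bij[OF X]] by force
  have len: "length b = length a"
    using a b(1) by (simp add: length_finite_permutations_of_set)
  have perm: "list_permutes (zip a b) X"
    using a b(1) len by (intro list_permutesI) (auto simp: permutations_of_set_def)
  have "map (permutation_of_list (zip a b)) a = b"
  proof (rule nth_equalityI)
    fix i assume "i < length (map (permutation_of_list (zip a b)) a)"
    then have "(a ! i, b ! i) \<in> set (zip a b)" using len by (auto simp: in_set_zip)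
    then show "map (permutation_of_list (zip a b)) a ! i = b ! i"
      using \<open>i < _\<close> permutation_of_list_unique[OF perm] by simp
  qed (use len in simp)
  then show ?thesis
    using b(2) permutation_of_list_permutes[OF perm] by (auto intro!: exI[of _ "permutation_of_list (zip a b)"])
qed

section \<open>Relabellings that respect the pivots\<close>

definition respects_pivots :: "'a::linorder \<Rightarrow> 'a \<Rightarrow> ('a \<Rightarrow> 'a) \<Rightarrow> bool" where
  "respects_pivots p q \<sigma> \<longleftrightarrow> (\<forall>x. (\<sigma> x < p \<longleftrightarrow> x < p) \<and> (\<sigma> x < q \<longleftrightarrow> x < q) \<and> (q < \<sigma> x \<longleftrightarrow> q < x))"

lemma respects_pivotsD:
  "respects_pivots p q \<sigma> \<Longrightarrow> (\<sigma> x < p \<longleftrightarrow> x < p) \<and> (\<sigma> x < q \<longleftrightarrow> x < q) \<and> (q < \<sigma> x \<longleftrightarrow> q < x)"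
  unfolding respects_pivots_def by (erule spec)

lemma respects_pivots_permutes:
  assumes \<sigma>: "\<sigma> permutes A" and "p < q"
    and A: "A \<subseteq> {y. y < p} \<or> A \<subseteq> {y. p < y \<and> y < q} \<or> A \<subseteq> {y. q < y}"
  shows "respects_pivots p q \<sigma> \<and> \<sigma> p = p \<and> \<sigma> q = q"
proof -
  have "p \<notin> A" "q \<notin> A" using A \<open>p < q\<close> by auto
  then have fixed: "\<sigma> p = p" "\<sigma> q = q" using permutes_not_in[OF \<sigma>] by auto
  have "(\<sigma> x < p \<longleftrightarrow> x < p) \<and> (\<sigma> x < q \<longleftrightarrow> x < q) \<and> (q < \<sigma> x \<longleftrightarrow> q < x)" for x
  proof (cases "x \<in> A")
    case True
    then have "\<sigma> x \<in> A" using permutes_in_image[OF \<sigma>] by simp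
    then show ?thesis using True A \<open>p < q\<close> by auto
  next
    case False
    then show ?thesis using permutes_not_in[OF \<sigma>] by simp
  qed
  then show ?thesis using fixed unfolding respects_pivots_def by blast
qed

lemma respects_pivots_comp:
  "respects_pivots p q \<sigma> \<Longrightarrow> respects_pivots p q \<tau> \<Longrightarrow> respects_pivots p q (\<sigma> \<circ> \<tau>)"
  unfolding respects_pivots_def by simp

lemma respects_pivots_blocks:
  assumes "\<sigma>1 permutes A1" "\<sigma>2 permutes A2" "\<sigma>3 permutes A3"
    and "A1 \<subseteq> {y. y < p}" "A2 \<subseteq> {y. p < y \<and> y < q}" "A3 \<subseteq> {y. q < y}" and "p < q"
  shows "respects_pivots p q (\<sigma>1 \<circ> \<sigma>2 \<circ> \<sigma>3) \<and> (\<sigma>1 \<circ> \<sigma>2 \<circ> \<sigma>3) p = p \<and> (\<sigma>1 \<circ> \<sigma>2 \<circ> \<sigma>3) q = q"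
proof -
  have "respects_pivots p q \<sigma>1 \<and> \<sigma>1 p = p \<and> \<sigma>1 q = q"
    using respects_pivots_permutes[OF assms(1) \<open>p < q\<close>] assms(4) by blast
  moreover have "respects_pivots p q \<sigma>2 \<and> \<sigma>2 p = p \<and> \<sigma>2 q = q"
    using respects_pivots_permutes[OF assms(2) \<open>p < q\<close>] assms(5) by blast
  moreover have "respects_pivots p q \<sigma>3 \<and> \<sigma>3 p = p \<and> \<sigma>3 q = q"
    using respects_pivots_permutes[OF assms(3) \<open>p < q\<close>] assms(6) by blast
  ultimately show ?thesis by (auto intro: respects_pivots_comp)
qed

lemma comp_disjoint_permutes:
  assumes \<sigma>: "\<sigma>1 permutes A1" "\<sigma>2 permutes A2" "\<sigma>3 permutes A3"
    and disj: "A1 \<inter> A2 = {}" "A1 \<inter> A3 = {}" "A2 \<inter> A3 = {}"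
  shows "\<forall>x\<in>A1. (\<sigma>1 \<circ> \<sigma>2 \<circ> \<sigma>3) x = \<sigma>1 x" "\<forall>x\<in>A2. (\<sigma>1 \<circ> \<sigma>2 \<circ> \<sigma>3) x = \<sigma>2 x"
    "\<forall>x\<in>A3. (\<sigma>1 \<circ> \<sigma>2 \<circ> \<sigma>3) x = \<sigma>3 x"
proof -
  note fix1 = permutes_not_in[OF \<sigma>(1)] and fix2 = permutes_not_in[OF \<sigma>(2)] and fix3 = permutes_not_in[OF \<sigma>(3)]
  show "\<forall>x\<in>A1. (\<sigma>1 \<circ> \<sigma>2 \<circ> \<sigma>3) x = \<sigma>1 x"
  proof
    fix x assume "x \<in> A1"
    then have "x \<notin> A2" "x \<notin> A3" using disj by auto
    then show "(\<sigma>1 \<circ> \<sigma>2 \<circ> \<sigma>3) x = \<sigma>1 x" using fix2 fix3 by simp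
  qed
  show "\<forall>x\<in>A2. (\<sigma>1 \<circ> \<sigma>2 \<circ> \<sigma>3) x = \<sigma>2 x"
  proof
    fix x assume "x \<in> A2"
    then have "x \<notin> A3" "\<sigma>2 x \<notin> A1" using permutes_in_image[OF \<sigma>(2)] disj by auto
    then show "(\<sigma>1 \<circ> \<sigma>2 \<circ> \<sigma>3) x = \<sigma>2 x" using fix1 fix3 by simp
  qed
  show "\<forall>x\<in>A3. (\<sigma>1 \<circ> \<sigma>2 \<circ> \<sigma>3) x = \<sigma>3 x"
  proof
    fix x assume "x \<in> A3"
    then have "\<sigma>3 x \<notin> A1" "\<sigma>3 x \<notin> A2" using permutes_in_image[OF \<sigma>(3)] disj by auto
    then show "(\<sigma>1 \<circ> \<sigma>2 \<circ> \<sigma>3) x = \<sigma>3 x" using fix1 fix2 by simp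
  qed
qed

section \<open>The partitioning algorithm\<close>

lemma dec_g_props:
  assumes "k \<le> g"
  shows "k \<le> dec_g A q k g \<and> dec_g A q k g \<le> g
    \<and> (\<forall>i. dec_g A q k g < i \<and> i \<le> g \<longrightarrow> q < A i)
    \<and> (dec_g A q k g = k \<or> \<not> q < A (dec_g A q k g))"
  using assms
proof (induction A q k g rule: dec_g.induct)
  case (1 A q k g)
  show ?case
  proof (cases "q < A g \<and> k < g")
    case True
    then have step: "dec_g A q k g = dec_g A q k (g - 1)" by (subst dec_g.simps) (use True in auto)
    have "k \<le> g - 1" using True by auto
    with 1(1)[OF True] have IH: "k \<le> dec_g A q k (g - 1) \<and> dec_g A q k (g - 1) \<le> g - 1
      \<and> (\<forall>i. dec_g A q k (g - 1) < i \<and> i \<le> g - 1 \<longrightarrow> q < A i)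
      \<and> (dec_g A q k (g - 1) = k \<or> \<not> q < A (dec_g A q k (g - 1)))" by blast
    show ?thesis unfolding step
    proof (intro conjI allI impI)
      fix i assume "dec_g A q k (g - 1) < i \<and> i \<le> g"
      then show "q < A i" using IH True by (cases "i = g") auto
    qed (use IH in auto)
  next
    case False
    then have "dec_g A q k g = g" by (subst dec_g.simps) (use False in auto)
    then show ?thesis using False 1(2) by auto
  qed
qed

lemma dec_g_cong:
  assumes "\<And>i. k \<le> i \<Longrightarrow> i \<le> g \<Longrightarrow> q < A' i \<longleftrightarrow> q < A i"
  shows "dec_g A' q k g = dec_g A q k g"
  using assms
proof (induction A q k g rule: dec_g.induct)
  case (1 A q k g)
  show ?case
  proof (cases "k < g")
    case True
    have "q < A' g \<longleftrightarrow> q < A g" using 1(2)[of g] True by auto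
    moreover have "q < A g \<Longrightarrow> dec_g A' q k (g - 1) = dec_g A q k (g - 1)"
      using 1 True by auto
    ultimately show ?thesis using True by (subst (1 2) dec_g.simps) auto
  next
    case False
    then show ?thesis by (subst (1 2) dec_g.simps) simp
  qed
qed

lemma yloop_small:
  "k \<le> g \<Longrightarrow> A k < p \<Longrightarrow> yloop A p q l g k = yloop (aswap A k l) p q (l + 1) g (k + 1)"
  by (subst yloop.simps) simp

lemma yloop_large_middle:
  "k \<le> g \<Longrightarrow> \<not> A k < p \<Longrightarrow> q \<le> A k \<Longrightarrow> p \<le> A (dec_g A q k g) \<Longrightarrow>
   yloop A p q l g k = yloop (aswap A k (dec_g A q k g)) p q l (dec_g A q k g - 1) (k + 1)"
  by (subst yloop.simps) (simp add: Let_def)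

lemma yloop_large_small:
  "k \<le> g \<Longrightarrow> \<not> A k < p \<Longrightarrow> q \<le> A k \<Longrightarrow> \<not> p \<le> A (dec_g A q k g) \<Longrightarrow>
   yloop A p q l g k
     = yloop (aswap (aswap A k (dec_g A q k g)) k l) p q (l + 1) (dec_g A q k g - 1) (k + 1)"
  by (subst yloop.simps) (simp add: Let_def)

lemma yloop_middle:
  "k \<le> g \<Longrightarrow> \<not> A k < p \<Longrightarrow> \<not> q \<le> A k \<Longrightarrow> yloop A p q l g k = yloop A p q l g (k + 1)"
  by (subst yloop.simps) simp

lemma yloop_exit: "\<not> k \<le> g \<Longrightarrow> yloop A p q l g k = (A, l, g)"
  by (subst yloop.simps) simp

lemma aswap_comp_permutes:
  assumes "\<pi> permutes S" "i \<in> S" "j \<in> S"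
  shows "Transposition.transpose i j \<circ> \<pi> permutes S \<and> aswap B i j \<circ> \<pi> = B \<circ> (Transposition.transpose i j \<circ> \<pi>)"
  using permutes_compose[OF assms(1) permutes_swap_id[OF assms(2,3)]]
  by (auto simp: aswap_def Transposition.transpose_def fun_eq_iff)

lemma yloop_permutes:
  assumes "lo \<le> l" "l \<le> k" "g \<le> hi"
  shows "\<exists>\<pi>. \<pi> permutes {lo..hi} \<and> fst (yloop A p q l g k) = A \<circ> \<pi>"
  using assms
proof (induction A p q l g k rule: yloop.induct)
  case (1 A p q l g k)
  show ?case
  proof (cases "k \<le> g")
    case False
    then show ?thesis by (auto simp: yloop_exit intro: permutes_id)
  next
    case kg: True
    then have k: "k \<in> {lo..hi}" and l: "l \<in> {lo..hi}" using 1(5-7) by auto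
    show ?thesis
    proof (cases "A k < p")
      case True
      have "\<exists>\<pi>. \<pi> permutes {lo..hi} \<and> fst (yloop (aswap A k l) p q (l + 1) g (k + 1)) = aswap A k l \<circ> \<pi>"
        by (rule 1(1)[OF kg True]) (use 1(5-7) in auto)
      then obtain \<pi> where \<pi>: "\<pi> permutes {lo..hi}"
        "fst (yloop (aswap A k l) p q (l + 1) g (k + 1)) = aswap A k l \<circ> \<pi>"
        by blast
      obtain \<tau> where "\<tau> permutes {lo..hi}" "aswap A k l \<circ> \<pi> = A \<circ> \<tau>"
        using aswap_comp_permutes[OF \<pi>(1) k l, of A] by blast
      then show ?thesis unfolding yloop_small[of k g A p, OF kg True] using \<pi>(2) by auto
    next
      case nlt: False
      show ?thesis
      proof (cases "q \<le> A k")
        case ge: True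
        define x where "x = dec_g A q k g"
        have x: "x \<in> {lo..hi}" "k \<le> x" "x \<le> g" using dec_g_props[OF kg, of A q] 1(5-7) unfolding x_def by auto
        show ?thesis
        proof (cases "p \<le> A x")
          case True
          have "\<exists>\<pi>. \<pi> permutes {lo..hi} \<and> fst (yloop (aswap A k x) p q l (x - 1) (k + 1)) = aswap A k x \<circ> \<pi>"
            by (rule 1(2)[OF kg nlt ge x_def True]) (use 1(5-7) x in auto)
          then obtain \<pi> where \<pi>: "\<pi> permutes {lo..hi}"
            "fst (yloop (aswap A k x) p q l (x - 1) (k + 1)) = aswap A k x \<circ> \<pi>"
            by blast
          obtain \<tau> where "\<tau> permutes {lo..hi}" "aswap A k x \<circ> \<pi> = A \<circ> \<tau>"
            using aswap_comp_permutes[OF \<pi>(1) k x(1), of A] by blast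
          then show ?thesis
            unfolding yloop_large_middle[of k g A p q, OF kg nlt ge True[unfolded x_def]] x_def[symmetric]
            using \<pi>(2) by auto
        next
          case False
          have "\<exists>\<pi>. \<pi> permutes {lo..hi} \<and>
            fst (yloop (aswap (aswap A k x) k l) p q (l + 1) (x - 1) (k + 1)) = aswap (aswap A k x) k l \<circ> \<pi>"
            by (rule 1(3)[OF kg nlt ge x_def False]) (use 1(5-7) x in auto)
          then obtain \<pi> where \<pi>: "\<pi> permutes {lo..hi}"
            "fst (yloop (aswap (aswap A k x) k l) p q (l + 1) (x - 1) (k + 1)) = aswap (aswap A k x) k l \<circ> \<pi>"
            by blast
          obtain \<rho> where \<rho>: "\<rho> permutes {lo..hi}" "aswap (aswap A k x) k l \<circ> \<pi> = aswap A k x \<circ> \<rho>"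
            using aswap_comp_permutes[OF \<pi>(1) k l, of "aswap A k x"] by blast
          obtain \<tau> where "\<tau> permutes {lo..hi}" "aswap A k x \<circ> \<rho> = A \<circ> \<tau>"
            using aswap_comp_permutes[OF \<rho>(1) k x(1), of A] by blast
          then show ?thesis
            unfolding yloop_large_small[of k g A p q, OF kg nlt ge False[unfolded x_def]] x_def[symmetric]
            using \<pi>(2) \<rho>(2) by auto
        qed
      next
        case False
        then show ?thesis using 1(4)[OF kg nlt False] 1(5-7) by (simp add: yloop_middle[of k g A p q, OF kg nlt])
      qed
    qed
  qed
qed

definition yinv :: "nat \<Rightarrow> nat \<Rightarrow> 'a::linorder \<Rightarrow> 'a \<Rightarrow> (nat \<Rightarrow> 'a) \<Rightarrow> nat \<Rightarrow> nat \<Rightarrow> nat \<Rightarrow> bool" where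
  "yinv lo hi p q A l g k \<longleftrightarrow> lo \<le> l \<and> l \<le> k \<and> l \<le> g + 1 \<and> g \<le> hi
    \<and> (\<forall>i. lo \<le> i \<and> i < l \<longrightarrow> A i < p)
    \<and> (\<forall>i. l \<le> i \<and> i < k \<and> i \<le> g \<longrightarrow> p \<le> A i \<and> A i \<le> q)
    \<and> (\<forall>i. g < i \<and> i \<le> hi \<longrightarrow> q \<le> A i)"

lemma yinv_small:
  assumes "yinv lo hi p q A l g k" "k \<le> g" "A k < p"
  shows "yinv lo hi p q (aswap A k l) (l + 1) g (k + 1)"
  using assms unfolding yinv_def aswap_def by (auto simp: less_Suc_eq)

lemma yinv_large:
  assumes "yinv lo hi p q A l g k" "k \<le> g" "q \<le> A k" "x = dec_g A q k g" "1 \<le> lo" "p \<le> q"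
  shows "p \<le> A x \<Longrightarrow> yinv lo hi p q (aswap A k x) l (x - 1) (k + 1)"
    and "\<not> p \<le> A x \<Longrightarrow> yinv lo hi p q (aswap (aswap A k x) k l) (l + 1) (x - 1) (k + 1)"
proof -
  have x: "k \<le> x" "x \<le> g" "\<And>i. x < i \<Longrightarrow> i \<le> g \<Longrightarrow> q < A i" "x = k \<or> \<not> q < A x"
    using dec_g_props[OF assms(2), of A q] assms(4) by auto
  have above: "\<And>i. x < i \<Longrightarrow> i \<le> hi \<Longrightarrow> q \<le> A i"
    using x(3) assms(1) unfolding yinv_def by (metis less_imp_le not_le)
  have x1: "\<And>i. x - 1 < i \<longleftrightarrow> x \<le> i" using x(1) assms(1,5) unfolding yinv_def by auto
  show "p \<le> A x \<Longrightarrow> yinv lo hi p q (aswap A k x) l (x - 1) (k + 1)"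
    using assms x above x1 unfolding yinv_def aswap_def by (auto simp: less_Suc_eq)
  assume small: "\<not> p \<le> A x"
  then have "k < x" using x(1) assms(3,6) by (cases "x = k") auto
  then show "yinv lo hi p q (aswap (aswap A k x) k l) (l + 1) (x - 1) (k + 1)"
    using assms x above x1 small unfolding yinv_def aswap_def by (auto simp: less_Suc_eq)
qed

lemma yinv_middle:
  assumes "yinv lo hi p q A l g k" "k \<le> g" "\<not> A k < p" "\<not> q \<le> A k"
  shows "yinv lo hi p q A l g (k + 1)"
  using assms unfolding yinv_def by (auto simp: less_Suc_eq)

lemma yloop_invariant:
  assumes "yinv lo hi p q A l g k" "p \<le> q" "1 \<le> lo"
  shows "case yloop A p q l g k of (B, l', g') \<Rightarrow> yinv lo hi p q B l' g' (g' + 1)"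
  using assms
proof (induction A p q l g k rule: yloop.induct)
  case (1 A p q l g k)
  show ?case
  proof (cases "k \<le> g")
    case False
    then show ?thesis using 1(5) by (simp add: yloop_exit yinv_def)
  next
    case kg: True
    show ?thesis
    proof (cases "A k < p")
      case True
      then show ?thesis
        using 1(1)[OF kg True yinv_small[OF 1(5) kg True] 1(6,7)] by (simp add: yloop_small[of k g A p, OF kg True])
    next
      case nlt: False
      show ?thesis
      proof (cases "q \<le> A k")
        case ge: True
        define x where "x = dec_g A q k g"
        note inv = yinv_large[OF 1(5) kg ge x_def 1(7,6)]
        show ?thesis
        proof (cases "p \<le> A x")
          case True
          show ?thesis using 1(2)[OF kg nlt ge x_def True inv(1)[OF True] 1(6,7)]
            unfolding yloop_large_middle[of k g A p q, OF kg nlt ge True[unfolded x_def]] x_def .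
        next
          case False
          show ?thesis using 1(3)[OF kg nlt ge x_def False inv(2)[OF False] 1(6,7)]
            unfolding yloop_large_small[of k g A p q, OF kg nlt ge False[unfolded x_def]] x_def .
        qed
      next
        case False
        then show ?thesis using 1(4)[OF kg nlt False yinv_middle[OF 1(5) kg nlt False] 1(6,7)]
          by (simp add: yloop_middle[of k g A p q, OF kg nlt])
      qed
    qed
  qed
qed

(* The main loop only compares keys with the pivots, so running it on a relabelled array gives the
   same indices and the relabelled result. *)
lemma yloop_relabel:
  assumes "respects_pivots p q \<sigma>" "lo \<le> l" "l \<le> k" "g \<le> hi"
    and "\<And>i. lo \<le> i \<Longrightarrow> i \<le> hi \<Longrightarrow> A' i = \<sigma> (A i)"
  shows "snd (yloop A' p q l g k) = snd (yloop A p q l g k) \<and>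
    (\<forall>i. lo \<le> i \<and> i \<le> hi \<longrightarrow> fst (yloop A' p q l g k) i = \<sigma> (fst (yloop A p q l g k) i))"
  using assms
proof (induction A p q l g k arbitrary: A' rule: yloop.induct)
  case (1 A p q l g k)
  note rng = 1(6-8) and A' = 1(9)
  have cmp: "(\<sigma> x < p \<longleftrightarrow> x < p) \<and> (q \<le> \<sigma> x \<longleftrightarrow> q \<le> x) \<and> (q < \<sigma> x \<longleftrightarrow> q < x) \<and> (p \<le> \<sigma> x \<longleftrightarrow> p \<le> x)" for x
    using respects_pivotsD[OF 1(5), of x] by (metis not_less)
  have swapped: "aswap B' i j m = \<sigma> (aswap B i j m)"
    if "\<And>m. lo \<le> m \<Longrightarrow> m \<le> hi \<Longrightarrow> B' m = \<sigma> (B m)" "i \<in> {lo..hi}" "j \<in> {lo..hi}" "m \<in> {lo..hi}" for B B' i j m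
    using that by (auto simp: aswap_def)
  show ?case
  proof (cases "k \<le> g")
    case False
    then show ?thesis using A' by (simp add: yloop_exit)
  next
    case kg: True
    have k: "k \<in> {lo..hi}" and l: "l \<in> {lo..hi}" using rng kg by auto
    have c1: "A' k < p \<longleftrightarrow> A k < p" "q \<le> A' k \<longleftrightarrow> q \<le> A k" using cmp[of "A k"] A' k by auto
    show ?thesis
    proof (cases "A k < p")
      case True
      have "yloop A' p q l g k = yloop (aswap A' k l) p q (l + 1) g (k + 1)"
        using yloop_small[of k g A' p] kg True c1 by simp
      then show ?thesis unfolding yloop_small[of k g A p, OF kg True]
        using 1(1)[OF kg True 1(5), of "aswap A' k l"] rng kg swapped[OF A' k l] by auto
    next
      case nlt: False
      show ?thesis
      proof (cases "q \<le> A k")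
        case ge: True
        define x where "x = dec_g A q k g"
        have dx: "dec_g A' q k g = x" unfolding x_def
          by (rule dec_g_cong) (use cmp A' rng in auto)
        have x: "x \<in> {lo..hi}" "k \<le> x" using dec_g_props[OF kg, of A q] rng unfolding x_def by auto
        have c2: "p \<le> A' x \<longleftrightarrow> p \<le> A x" using cmp[of "A x"] A' x by auto
        show ?thesis
        proof (cases "p \<le> A x")
          case True
          have "yloop A' p q l g k = yloop (aswap A' k x) p q l (x - 1) (k + 1)"
            using yloop_large_middle[of k g A' p q] kg nlt ge c1 c2 dx True by simp
          then show ?thesis
            unfolding yloop_large_middle[of k g A p q, OF kg nlt ge True[unfolded x_def]] x_def[symmetric]
            using 1(2)[OF kg nlt ge x_def True 1(5), of "aswap A' k x"] rng x swapped[OF A' k x(1)] by auto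
        next
          case False
          have "yloop A' p q l g k = yloop (aswap (aswap A' k x) k l) p q (l + 1) (x - 1) (k + 1)"
            using yloop_large_small[of k g A' p q] kg nlt ge c1 c2 dx False by simp
          then show ?thesis
            unfolding yloop_large_small[of k g A p q, OF kg nlt ge False[unfolded x_def]] x_def[symmetric]
            using 1(3)[OF kg nlt ge x_def False 1(5), of "aswap (aswap A' k x) k l"] rng x
              swapped[OF swapped[OF A' k x(1)] k l] by auto
        qed
      next
        case False
        have "yloop A' p q l g k = yloop A' p q l g (k + 1)"
          using yloop_middle[of k g A' p q] kg nlt False c1 by simp
        then show ?thesis unfolding yloop_middle[of k g A p q, OF kg nlt False]
          using 1(4)[OF kg nlt False 1(5), of A'] rng A' by auto
      qed
    qed
  qed
qed

lemma ypartition_unfold: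
  assumes "p = min (A 1) (A n)" "q = max (A 1) (A n)" "yloop A p q 2 (n - 1) 2 = (B, l, g)"
  shows "ypartition A 1 n =
    (B(1 := B (l - 1), l - 1 := p, n := (B(1 := B (l - 1), l - 1 := p)) (g + 1), g + 1 := q), l - 1, g + 1)"
proof -
  have "(if A n < A 1 then A n else A 1) = p" "(if A n < A 1 then A 1 else A n) = q"
    using assms(1,2) by (auto simp: min_def max_def)
  then show ?thesis using assms(3) unfolding ypartition_def Let_def one_add_one by simp
qed

lemma ypartition_correct:
  assumes n: "2 \<le> n" and pq: "p = min (A 1) (A n)" "q = max (A 1) (A n)"
    and C: "ypartition A 1 n = (C, ip, iq)"
  shows "1 \<le> ip \<and> ip < iq \<and> iq \<le> n \<and> C ip = p \<and> C iq = q
    \<and> (\<forall>j. 1 \<le> j \<and> j < ip \<longrightarrow> C j < p)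
    \<and> (\<forall>j. ip < j \<and> j < iq \<longrightarrow> p \<le> C j \<and> C j \<le> q)
    \<and> (\<forall>j. iq < j \<and> j \<le> n \<longrightarrow> q \<le> C j)
    \<and> (\<exists>\<pi>. \<pi> permutes {1..n} \<and> (\<forall>j\<in>{1..n}. C j = A (\<pi> j)))"
proof -
  obtain B l g where yl: "yloop A p q 2 (n - 1) 2 = (B, l, g)" by (metis prod_cases3)
  have C_eq: "C = B(1 := B (l - 1), l - 1 := p, n := (B(1 := B (l - 1), l - 1 := p)) (g + 1), g + 1 := q)"
    and ip: "ip = l - 1" and iq: "iq = g + 1" using ypartition_unfold[OF pq(1,2) yl] C by auto
  have "yinv 2 (n - 1) p q A 2 (n - 1) 2" using n unfolding yinv_def by auto
  moreover have "p \<le> q" using pq by (auto simp: min_def max_def)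
  ultimately have "yinv 2 (n - 1) p q B l g (g + 1)" using yloop_invariant[of 2] yl by fastforce
  then have lg: "2 \<le> l" "l \<le> g + 1" "g \<le> n - 1"
    and small: "\<And>i. 2 \<le> i \<Longrightarrow> i < l \<Longrightarrow> B i < p"
    and middle: "\<And>i. l \<le> i \<Longrightarrow> i \<le> g \<Longrightarrow> p \<le> B i \<and> B i \<le> q"
    and large: "\<And>i. g < i \<Longrightarrow> i \<le> n - 1 \<Longrightarrow> q \<le> B i"
    unfolding yinv_def by auto
  obtain \<pi> where \<pi>: "\<pi> permutes {2..n - 1}" "B = A \<circ> \<pi>"
    using yloop_permutes[of 2 2 2 "n - 1" "n - 1" A p q] yl by auto
  have fixed: "\<pi> 1 = 1" "\<pi> n = n" using permutes_not_in[OF \<pi>(1)] n by auto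
  have "C j < p" if "1 \<le> j" "j < ip" for j
    using that lg n small[of j] small[of "l - 1"] unfolding C_eq ip by (cases "j = 1") auto
  moreover have "p \<le> C j \<and> C j \<le> q" if "ip < j" "j < iq" for j
    using that lg n middle[of j] unfolding C_eq ip iq by auto
  moreover have "q \<le> C j" if "iq < j" "j \<le> n" for j
    using that lg n large[of j] large[of "g + 1"] unfolding C_eq iq by (cases "j = n") auto
  ultimately have regions: "(\<forall>j. 1 \<le> j \<and> j < ip \<longrightarrow> C j < p)
    \<and> (\<forall>j. ip < j \<and> j < iq \<longrightarrow> p \<le> C j \<and> C j \<le> q) \<and> (\<forall>j. iq < j \<and> j \<le> n \<longrightarrow> q \<le> C j)"
    by blast
  (* the final moves exchange A 1, A n with B (l - 1), B (g + 1) and put the pivots in order *)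
  define \<rho> where "\<rho> = Transposition.transpose 1 (l - 1) \<circ> Transposition.transpose n (g + 1)"
  define \<pi>' where "\<pi>' = (if A n < A 1 then \<pi> \<circ> Transposition.transpose 1 n else \<pi>)"
  have "\<pi>' \<circ> \<rho> permutes {1..n}"
  proof (rule permutes_compose)
    show "\<rho> permutes {1..n}" unfolding \<rho>_def
      by (rule permutes_compose[OF permutes_swap_id permutes_swap_id]) (use lg n in auto)
    have "\<pi> permutes {1..n}" by (rule permutes_subset[OF \<pi>(1)]) auto
    then show "\<pi>' permutes {1..n}" unfolding \<pi>'_def
      using permutes_compose[OF permutes_swap_id, of 1 "{1..n}" n \<pi>] n by auto
  qed
  moreover have "C j = A ((\<pi>' \<circ> \<rho>) j)" if "j \<in> {1..n}" for j
  proof -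
    define D where "D i = (if i = 1 then p else if i = n then q else B i)" for i
    have "C j = D (\<rho> j)" using that lg n unfolding C_eq D_def \<rho>_def by (auto simp: Transposition.transpose_def)
    also have "\<dots> = A (\<pi>' (\<rho> j))"
      using fixed \<pi>(2) n pq unfolding D_def \<pi>'_def by (auto simp: Transposition.transpose_def min_def max_def)
    finally show ?thesis by simp
  qed
  ultimately have "\<exists>\<pi>. \<pi> permutes {1..n} \<and> (\<forall>j\<in>{1..n}. C j = A (\<pi> j))" by blast
  moreover have "C ip = p" "C iq = q" using lg n unfolding C_eq ip iq by auto
  ultimately show ?thesis using regions lg n unfolding ip iq by auto
qed

lemma ypartition_relabel:
  assumes n: "2 \<le> n" and pq: "p = min (A 1) (A n)" "q = max (A 1) (A n)"
    and \<sigma>: "respects_pivots p q \<sigma>" "\<sigma> p = p" "\<sigma> q = q"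
    and A': "\<And>j. 1 \<le> j \<Longrightarrow> j \<le> n \<Longrightarrow> A' j = \<sigma> (A j)"
    and C: "ypartition A 1 n = (C, ip, iq)"
  shows "\<exists>C'. ypartition A' 1 n = (C', ip, iq) \<and> (\<forall>j\<in>{1..n}. C' j = \<sigma> (C j))"
proof -
  have ends: "\<sigma> (A 1) = A 1" "\<sigma> (A n) = A n" using \<sigma>(2,3) pq by (auto simp: min_def max_def split: if_splits)
  then have pq': "p = min (A' 1) (A' n)" "q = max (A' 1) (A' n)" using pq A'[of 1] A'[of n] n by auto
  obtain B l g where yl: "yloop A p q 2 (n - 1) 2 = (B, l, g)" by (metis prod_cases3)
  obtain B' l' g' where yl': "yloop A' p q 2 (n - 1) 2 = (B', l', g')" by (metis prod_cases3)
  have "snd (yloop A' p q 2 (n - 1) 2) = snd (yloop A p q 2 (n - 1) 2) \<and>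
    (\<forall>i. 2 \<le> i \<and> i \<le> n - 1 \<longrightarrow> fst (yloop A' p q 2 (n - 1) 2) i = \<sigma> (fst (yloop A p q 2 (n - 1) 2) i))"
    by (rule yloop_relabel[OF \<sigma>(1)]) (use A' in auto)
  then have lg': "l' = l" "g' = g" and inner: "\<And>i. 2 \<le> i \<Longrightarrow> i \<le> n - 1 \<Longrightarrow> B' i = \<sigma> (B i)"
    using yl yl' by auto
  obtain \<pi> \<pi>' where "\<pi> permutes {2..n - 1}" "B = A \<circ> \<pi>" "\<pi>' permutes {2..n - 1}" "B' = A' \<circ> \<pi>'"
    using yloop_permutes[of 2 2 2 "n - 1" "n - 1" _ p q] yl yl' by (metis fst_conv order_refl)
  then have frame: "B 1 = A 1" "B n = A n" "B' 1 = A' 1" "B' n = A' n"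
    using permutes_not_in n by fastforce+
  have all: "B' j = \<sigma> (B j)" if "1 \<le> j" "j \<le> n" for j
    using that inner[of j] frame ends A'[of 1] A'[of n] n by (cases "j = 1 \<or> j = n") auto
  have "yinv 2 (n - 1) p q A 2 (n - 1) 2" using n unfolding yinv_def by auto
  moreover have "p \<le> q" using pq by (auto simp: min_def max_def)
  ultimately have "yinv 2 (n - 1) p q B l g (g + 1)" using yloop_invariant[of 2] yl by fastforce
  then have lg: "2 \<le> l" "l \<le> g + 1" "g \<le> n - 1" unfolding yinv_def by auto
  have C_eq: "C = B(1 := B (l - 1), l - 1 := p, n := (B(1 := B (l - 1), l - 1 := p)) (g + 1), g + 1 := q)"
    and ip: "ip = l - 1" and iq: "iq = g + 1" using ypartition_unfold[OF pq yl] C by auto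
  define C' where "C' = B'(1 := B' (l - 1), l - 1 := p, n := (B'(1 := B' (l - 1), l - 1 := p)) (g + 1), g + 1 := q)"
  have "ypartition A' 1 n = (C', ip, iq)" using ypartition_unfold[OF pq' yl'] lg' unfolding C'_def ip iq by simp
  moreover have "C' j = \<sigma> (C j)" if "j \<in> {1..n}" for j
    using that lg n all[of j] all[of "l - 1"] all[of "g + 1"] \<sigma>(2,3) unfolding C_eq C'_def by auto
  ultimately show ?thesis by blast
qed

definition pivots :: "'a::linorder list \<Rightarrow> 'a \<times> 'a" where
  "pivots xs = (min (hd xs) (last xs), max (hd xs) (last xs))"

lemma in_set_drop_take:
  assumes "y \<in> set (drop a (take b ys))"
  shows "\<exists>i. a \<le> i \<and> i < b \<and> i < length ys \<and> ys ! i = y"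
proof -
  obtain j where j: "j < length (drop a (take b ys))" "drop a (take b ys) ! j = y"
    using assms by (auto simp: in_set_conv_nth)
  then have lt: "a + j < b" "a + j < length ys" by auto
  have "drop a (take b ys) ! j = take b ys ! (a + j)" by (rule nth_drop) (use lt in simp)
  also have "\<dots> = ys ! (a + j)" using lt(1) by (rule nth_take)
  finally have "a \<le> a + j \<and> a + j < b \<and> a + j < length ys \<and> ys ! (a + j) = y" using j(2) lt by simp
  then show ?thesis by (rule exI)
qed

lemma split_at_two:
  assumes "i < j" "j < length ys"
  shows "ys = take i ys @ ys ! i # drop (Suc i) (take j ys) @ ys ! j # drop (Suc j) ys"
proof -
  have prefix: "take j ys = take i ys @ ys ! i # drop (Suc i) (take j ys)"
  proof -
    have "take j ys = take (Suc i) ys @ drop (Suc i) (take j ys)"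
      using assms(1) by (metis append_take_drop_id min.absorb1 Suc_leI take_take)
    also have "take (Suc i) ys = take i ys @ [ys ! i]" using assms by (simp add: take_Suc_conv_app_nth)
    finally show ?thesis by simp
  qed
  have "ys = take j ys @ ys ! j # drop (Suc j) ys" by (rule id_take_nth_drop[OF assms(2)])
  also have "\<dots> = (take i ys @ ys ! i # drop (Suc i) (take j ys)) @ ys ! j # drop (Suc j) ys"
    by (subst prefix) (rule refl)
  finally show ?thesis by simp
qed

lemma ypart_list_partition:
  assumes xs: "distinct xs" "2 \<le> length xs" and yp: "ypart_list xs = (ys, ip, iq)"
    and pv: "pivots xs = (p, q)"
  shows "ys \<in> permutations_of_set (set xs)" "1 \<le> ip" "ip < iq" "iq \<le> length xs"
    and "ys = take (ip - 1) ys @ p # drop ip (take (iq - 1) ys) @ q # drop iq ys"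
    and "\<forall>y \<in> set (take (ip - 1) ys). y < p"
    and "\<forall>y \<in> set (drop ip (take (iq - 1) ys)). p \<le> y \<and> y \<le> q"
    and "\<forall>y \<in> set (drop iq ys). q \<le> y"
proof -
  define n where "n = length xs"
  define A where "A = (\<lambda>i. xs ! (i - 1))"
  obtain C where C: "ypartition A 1 n = (C, ip, iq)" and ys: "ys = map C [1..<n + 1]"
    using yp unfolding ypart_list_def A_def n_def by (auto simp: Let_def split: prod.splits)
  have "xs \<noteq> []" using xs(2) by auto
  then have ends: "A 1 = hd xs" "A n = last xs" unfolding A_def n_def by (auto simp: hd_conv_nth last_conv_nth)
  have pq: "p = min (A 1) (A n)" "q = max (A 1) (A n)" using pv ends unfolding pivots_def by auto
  note R = ypartition_correct[OF xs(2)[folded n_def] pq C]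
  then obtain \<pi> where \<pi>: "\<pi> permutes {1..n}" "\<forall>j\<in>{1..n}. C j = A (\<pi> j)" by blast
  have len: "length ys = n" and ys_nth: "\<And>i. i < n \<Longrightarrow> ys ! i = C (i + 1)"
    unfolding ys by (simp_all del: upt_Suc)
  have "set ys = C ` {1..n}" unfolding ys by auto
  also have "\<dots> = A ` \<pi> ` {1..n}" using \<pi>(2) by (auto simp: image_iff)
  also have "\<dots> = set xs"
  proof -
    have "A ` {1..n} = set xs"
    proof
      show "A ` {1..n} \<subseteq> set xs" unfolding A_def n_def by auto
      show "set xs \<subseteq> A ` {1..n}"
      proof
        fix x assume "x \<in> set xs"
        then obtain i where "i < n" "xs ! i = x" unfolding n_def by (auto simp: in_set_conv_nth)
        then show "x \<in> A ` {1..n}" unfolding A_def by (auto intro!: image_eqI[of _ _ "i + 1"])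
      qed
    qed
    then show ?thesis using permutes_image[OF \<pi>(1)] by simp
  qed
  finally have set_ys: "set ys = set xs" .
  then have "distinct ys" using len xs(1) unfolding n_def by (metis card_distinct distinct_card)
  then show "ys \<in> permutations_of_set (set xs)" using set_ys by auto
  show bounds: "1 \<le> ip" "ip < iq" "iq \<le> length xs" using R unfolding n_def by auto
  have "ys ! (ip - 1) = p" "ys ! (iq - 1) = q" using ys_nth[of "ip - 1"] ys_nth[of "iq - 1"] R bounds
    unfolding n_def by auto
  then show "ys = take (ip - 1) ys @ p # drop ip (take (iq - 1) ys) @ q # drop iq ys"
    using split_at_two[of "ip - 1" "iq - 1" ys] bounds len unfolding n_def by simp
  show "\<forall>y \<in> set (take (ip - 1) ys). y < p"
    using in_set_drop_take[of _ 0 "ip - 1" ys] ys_nth R len by fastforce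
  show "\<forall>y \<in> set (drop ip (take (iq - 1) ys)). p \<le> y \<and> y \<le> q"
    using in_set_drop_take[of _ ip "iq - 1" ys] ys_nth R len by fastforce
  show "\<forall>y \<in> set (drop iq ys). q \<le> y"
    using in_set_drop_take[of _ iq "length ys" ys] ys_nth R len by fastforce
qed

lemma ypart_list_relabel:
  assumes "2 \<le> length xs" "ypart_list xs = (ys, ip, iq)" "pivots xs = (p, q)"
    and \<sigma>: "respects_pivots p q \<sigma>" "\<sigma> p = p" "\<sigma> q = q"
  shows "ypart_list (map \<sigma> xs) = (map \<sigma> ys, ip, iq)"
proof -
  define n where "n = length xs"
  define A where "A = (\<lambda>i. xs ! (i - 1))"
  obtain C where C: "ypartition A 1 n = (C, ip, iq)" and ys: "ys = map C [1..<n + 1]"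
    using assms(2) unfolding ypart_list_def A_def n_def by (auto simp: Let_def split: prod.splits)
  have "xs \<noteq> []" using assms(1) by auto
  then have pq: "p = min (A 1) (A n)" "q = max (A 1) (A n)"
    using assms(3) unfolding pivots_def A_def n_def by (auto simp: hd_conv_nth last_conv_nth)
  obtain C' where C': "ypartition (\<lambda>i. map \<sigma> xs ! (i - 1)) 1 n = (C', ip, iq)" "\<forall>j\<in>{1..n}. C' j = \<sigma> (C j)"
    using ypartition_relabel[OF assms(1)[folded n_def] pq \<sigma>, of "\<lambda>i. map \<sigma> xs ! (i - 1)" C ip iq] C
    unfolding A_def n_def by auto
  have "ypart_list (map \<sigma> xs) = (map C' [1..<n + 1], ip, iq)"
    using C'(1) unfolding ypart_list_def n_def by (simp add: Let_def)
  also have "map C' [1..<n + 1] = map \<sigma> ys" unfolding ys using C'(2) by auto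
  finally show ?thesis .
qed

lemma partitioned_list:
  assumes d: "distinct (a @ p # b @ q # c)" and "p < q"
    and ord: "\<forall>y\<in>set a. y < p" "\<forall>y\<in>set b. p \<le> y \<and> y \<le> q" "\<forall>y\<in>set c. q \<le> y"
  defines "K \<equiv> set (a @ p # b @ q # c)"
  shows "set a = {y \<in> K. y < p}" "set b = {y \<in> K. p < y \<and> y < q}" "set c = {y \<in> K. q < y}"
    and "key_rank K p = length a" "key_rank K q = Suc (length a + length b)"
proof -
  have "p \<notin> set a" "p \<notin> set b" "q \<notin> set b" "q \<notin> set c" using d by auto
  then have b: "\<forall>y\<in>set b. p < y \<and> y < q" and c: "\<forall>y\<in>set c. q < y"
    using ord(2,3) by (auto simp: order.order_iff_strict)
  show a_eq: "set a = {y \<in> K. y < p}" using ord(1) b c \<open>p < q\<close> unfolding K_def by auto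
  show "set b = {y \<in> K. p < y \<and> y < q}" using ord(1) b c \<open>p < q\<close> unfolding K_def by auto
  show "set c = {y \<in> K. q < y}" using ord(1) b c \<open>p < q\<close> unfolding K_def by auto
  show "key_rank K p = length a"
    unfolding key_rank_def a_eq[symmetric] using d by (simp add: distinct_card)
  have below_q: "{y \<in> K. y < q} = set (a @ p # b)" using ord(1) b c \<open>p < q\<close> unfolding K_def by auto
  have "distinct (a @ p # b)" using d by auto
  then have "card (set (a @ p # b)) = Suc (length a + length b)" by (simp only: distinct_card) simp
  then show "key_rank K q = Suc (length a + length b)" unfolding key_rank_def below_q .
qed

section \<open>The arrangements with given pivot positions\<close>

definition yfibre :: "'a::linorder set \<Rightarrow> nat \<Rightarrow> nat \<Rightarrow> 'a list set" where
  "yfibre K ip iq = {xs \<in> permutations_of_set K. snd (ypart_list xs) = (ip, iq)}"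

definition pattern :: "nat \<Rightarrow> nat \<Rightarrow> 'a::linorder list \<Rightarrow> nat list \<times> nat list \<times> nat list" where
  "pattern ip iq xs = (case subarrays (fst (ypart_list xs)) ip iq of
     (a, b, c) \<Rightarrow> (rel_order a, rel_order b, rel_order c))"

lemma yfibre_blocks:
  assumes K: "2 \<le> card K" and xs: "xs \<in> yfibre K ip iq" and pv: "pivots xs = (p, q)"
    and abc: "subarrays (fst (ypart_list xs)) ip iq = (a, b, c)"
  shows "fst (ypart_list xs) = a @ p # b @ q # c" "p < q" "p \<in> K" "q \<in> K"
    and "a \<in> permutations_of_set {y \<in> K. y < p}" "b \<in> permutations_of_set {y \<in> K. p < y \<and> y < q}"
      "c \<in> permutations_of_set {y \<in> K. q < y}"
    and "key_rank K p = ip - 1" "key_rank K q = iq - 1"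
    and "length a = ip - 1" "length b = iq - ip - 1" "length c = card K - iq"
proof -
  have xsK: "distinct xs" "set xs = K" "length xs = card K"
    using xs unfolding yfibre_def by (auto simp: permutations_of_set_def distinct_card)
  obtain ys where yp: "ypart_list xs = (ys, ip, iq)" using xs unfolding yfibre_def by (cases "ypart_list xs") auto
  note P = ypart_list_partition[OF xsK(1) _ yp pv, unfolded xsK(2,3)]
  have parts: "a = take (ip - 1) ys" "b = drop ip (take (iq - 1) ys)" "c = drop iq ys"
    using abc yp unfolding subarrays_def by auto
  have ys: "ys = a @ p # b @ q # c" using P(5) K unfolding parts by simp
  then show "fst (ypart_list xs) = a @ p # b @ q # c" using yp by simp
  have dys: "distinct ys" "set ys = K" using P(1) K by (auto simp: permutations_of_set_def)
  have "p \<le> q" using pv unfolding pivots_def by (auto simp: min_def max_def)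
  moreover have "p \<noteq> q" using dys(1) ys by auto
  ultimately show pq: "p < q" by simp
  show "p \<in> K" "q \<in> K" using dys ys by auto
  have ord: "\<forall>y\<in>set a. y < p" "\<forall>y\<in>set b. p \<le> y \<and> y \<le> q" "\<forall>y\<in>set c. q \<le> y"
    using P(6-8) K unfolding parts by auto
  note seg = partitioned_list[OF dys(1)[unfolded ys] pq ord, folded ys, unfolded dys(2)]
  have d: "distinct a" "distinct b" "distinct c" using dys(1) ys by auto
  show "a \<in> permutations_of_set {y \<in> K. y < p}" "b \<in> permutations_of_set {y \<in> K. p < y \<and> y < q}"
    "c \<in> permutations_of_set {y \<in> K. q < y}" using seg(1-3) d by auto
  show len: "length a = ip - 1" "length b = iq - ip - 1" "length c = card K - iq"
    using P(2-4) K dys unfolding parts by (auto simp: distinct_card[symmetric])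
  show "key_rank K p = ip - 1" "key_rank K q = iq - 1" using seg(4,5) len P(2,3) K by auto
qed

(* All arrangements in the fibre have the same pivots: the keys of ranks ip - 1 and iq - 1. *)
lemma yfibre_pivots:
  assumes K: "finite K" "2 \<le> card K" and xs: "xs \<in> yfibre K ip iq" "xs' \<in> yfibre K ip iq"
  shows "pivots xs = pivots xs'"
proof -
  obtain p q p' q' where pv: "pivots xs = (p, q)" "pivots xs' = (p', q')" by fastforce
  obtain a b c a' b' c' where abc: "subarrays (fst (ypart_list xs)) ip iq = (a, b, c)"
    "subarrays (fst (ypart_list xs')) ip iq = (a', b', c')" by (metis prod_cases3)
  note B = yfibre_blocks[OF K(2) xs(1) pv(1) abc(1)] and B' = yfibre_blocks[OF K(2) xs(2) pv(2) abc(2)]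
  have inj: "inj_on (key_rank K) K" using bij_betw_imp_inj_on[OF key_rank_bij[OF K(1)]] .
  have "p = p'" using inj_onD[OF inj _ B(3) B'(3)] B(8) B'(8) by simp
  moreover have "q = q'" using inj_onD[OF inj _ B(4) B'(4)] B(9) B'(9) by simp
  ultimately show ?thesis using pv by simp
qed

lemma yfibre_pattern:
  assumes K: "2 \<le> card K" and xs: "xs \<in> yfibre K ip iq"
  shows "pattern ip iq xs \<in> permutations_of_set {0..<ip - 1} \<times> permutations_of_set {0..<iq - ip - 1}
           \<times> permutations_of_set {0..<card K - iq}"
proof -
  obtain p q where pv: "pivots xs = (p, q)" by fastforce
  obtain a b c where abc: "subarrays (fst (ypart_list xs)) ip iq = (a, b, c)" by (metis prod_cases3)
  note B = yfibre_blocks[OF K xs pv abc]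
  have "distinct a" "distinct b" "distinct c" using B(5-7) by (auto simp: permutations_of_set_def)
  then show ?thesis using rel_order_permutation B(10-12) abc unfolding pattern_def by fastforce
qed

lemma yfibre_relabel:
  assumes K: "2 \<le> card K" and xs: "xs \<in> yfibre K ip iq" and pv: "pivots xs = (p, q)"
    and \<sigma>: "\<sigma> permutes K" "respects_pivots p q \<sigma>" "\<sigma> p = p" "\<sigma> q = q"
    and abc: "subarrays (fst (ypart_list xs)) ip iq = (a, b, c)"
  shows "map \<sigma> xs \<in> yfibre K ip iq"
    and "pattern ip iq (map \<sigma> xs) = (rel_order (map \<sigma> a), rel_order (map \<sigma> b), rel_order (map \<sigma> c))"
proof -
  have xsK: "xs \<in> permutations_of_set K" "length xs = card K"
    using xs unfolding yfibre_def by (auto simp: length_finite_permutations_of_set)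
  obtain ys where yp: "ypart_list xs = (ys, ip, iq)" using xs unfolding yfibre_def by (cases "ypart_list xs") auto
  have yp': "ypart_list (map \<sigma> xs) = (map \<sigma> ys, ip, iq)"
    using ypart_list_relabel[OF _ yp pv \<sigma>(2-4)] xsK(2) K by simp
  have "map \<sigma> xs \<in> permutations_of_set K"
    using xsK(1) permutations_of_set_image_permutes[OF \<sigma>(1)] by blast
  then show "map \<sigma> xs \<in> yfibre K ip iq" using yp' unfolding yfibre_def by simp
  show "pattern ip iq (map \<sigma> xs) = (rel_order (map \<sigma> a), rel_order (map \<sigma> b), rel_order (map \<sigma> c))"
    using abc yp yp' unfolding pattern_def subarrays_def by (simp add: take_map drop_map)
qed

(* Within the fibre, the pattern determines the three subarrays: they are arrangements of fixed
   sets of keys, and an arrangement is determined by its relative order. *)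
lemma yfibre_pattern_inj:
  assumes K: "finite K" "2 \<le> card K" and xs: "xs \<in> yfibre K ip iq" "xs' \<in> yfibre K ip iq"
    and eq: "pattern ip iq xs = pattern ip iq xs'"
  shows "subarrays (fst (ypart_list xs)) ip iq = subarrays (fst (ypart_list xs')) ip iq"
proof -
  obtain p q where pv: "pivots xs = (p, q)" "pivots xs' = (p, q)"
    using yfibre_pivots[OF K xs] by fastforce
  obtain a b c a' b' c' where abc: "subarrays (fst (ypart_list xs)) ip iq = (a, b, c)"
    "subarrays (fst (ypart_list xs')) ip iq = (a', b', c')" by (metis prod_cases3)
  note B = yfibre_blocks[OF K(2) xs(1) pv(1) abc(1)] and B' = yfibre_blocks[OF K(2) xs(2) pv(2) abc(2)]
  have inj: "inj_on rel_order (permutations_of_set {y \<in> K. P y})" for P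
    by (rule bij_betw_imp_inj_on[OF rel_order_bij]) (use K(1) in auto)
  have ro: "rel_order a = rel_order a'" "rel_order b = rel_order b'" "rel_order c = rel_order c'"
    using eq abc unfolding pattern_def by auto
  have "a = a'" "b = b'" "c = c'"
    using inj_onD[OF inj ro(1) B(5) B'(5)] inj_onD[OF inj ro(2) B(6) B'(6)] inj_onD[OF inj ro(3) B(7) B'(7)] .
  then show ?thesis using abc by simp
qed

lemma yfibre_relabel_to_pattern:
  assumes K: "finite K" "2 \<le> card K" and xs: "xs \<in> yfibre K ip iq" and pv: "pivots xs = (p, q)"
    and t: "(\<alpha>, \<beta>, \<gamma>) \<in> permutations_of_set {0..<ip - 1} \<times> permutations_of_set {0..<iq - ip - 1}
              \<times> permutations_of_set {0..<card K - iq}"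
  shows "\<exists>\<sigma>. \<sigma> permutes K \<and> respects_pivots p q \<sigma> \<and> \<sigma> p = p \<and> \<sigma> q = q
           \<and> pattern ip iq (map \<sigma> xs) = (\<alpha>, \<beta>, \<gamma>)"
proof -
  define Ks where "Ks = {y \<in> K. y < p}"
  define Km where "Km = {y \<in> K. p < y \<and> y < q}"
  define Kl where "Kl = {y \<in> K. q < y}"
  obtain a b c where abc: "subarrays (fst (ypart_list xs)) ip iq = (a, b, c)" by (metis prod_cases3)
  note B = yfibre_blocks[OF K(2) xs pv abc, folded Ks_def Km_def Kl_def]
  have card: "card Ks = ip - 1" "card Km = iq - ip - 1" "card Kl = card K - iq"
    using B(5-7,10-12) by (simp_all add: length_finite_permutations_of_set[symmetric])
  have fin: "finite Ks" "finite Km" "finite Kl" using K(1) unfolding Ks_def Km_def Kl_def by auto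
  obtain \<sigma>1 \<sigma>2 \<sigma>3 where \<sigma>1: "\<sigma>1 permutes Ks" "rel_order (map \<sigma>1 a) = \<alpha>"
    and \<sigma>2: "\<sigma>2 permutes Km" "rel_order (map \<sigma>2 b) = \<beta>"
    and \<sigma>3: "\<sigma>3 permutes Kl" "rel_order (map \<sigma>3 c) = \<gamma>"
    using relabel_to_pattern[OF fin(1) B(5)] relabel_to_pattern[OF fin(2) B(6)]
      relabel_to_pattern[OF fin(3) B(7)] t card by (metis mem_Times_iff fst_conv snd_conv)
  define \<sigma> where "\<sigma> = \<sigma>1 \<circ> \<sigma>2 \<circ> \<sigma>3"
  have perm: "\<sigma> permutes K" unfolding \<sigma>_def
    by (intro permutes_compose permutes_subset[OF \<sigma>1(1)] permutes_subset[OF \<sigma>2(1)] permutes_subset[OF \<sigma>3(1)])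
      (auto simp: Ks_def Km_def Kl_def)
  have resp: "respects_pivots p q \<sigma> \<and> \<sigma> p = p \<and> \<sigma> q = q" unfolding \<sigma>_def
    by (rule respects_pivots_blocks[OF \<sigma>1(1) \<sigma>2(1) \<sigma>3(1) _ _ _ B(2)]) (auto simp: Ks_def Km_def Kl_def)
  have "Ks \<inter> Km = {}" "Ks \<inter> Kl = {}" "Km \<inter> Kl = {}" using B(2) unfolding Ks_def Km_def Kl_def by auto
  note acts = comp_disjoint_permutes[OF \<sigma>1(1) \<sigma>2(1) \<sigma>3(1) this, folded \<sigma>_def]
  have "set a = Ks" "set b = Km" "set c = Kl" using B(5-7) by (auto simp: permutations_of_set_def)
  then have maps: "map \<sigma> a = map \<sigma>1 a" "map \<sigma> b = map \<sigma>2 b" "map \<sigma> c = map \<sigma>3 c"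
    using acts by (auto intro!: map_cong)
  have "pattern ip iq (map \<sigma> xs) = (\<alpha>, \<beta>, \<gamma>)"
    using yfibre_relabel(2)[OF K(2) xs pv perm _ _ _ abc] resp \<sigma>1(2) \<sigma>2(2) \<sigma>3(2) unfolding maps by simp
  then show ?thesis using perm resp by blast
qed

(* Any two patterns are realised by equally many arrangements of the fibre: relabelling maps the
   arrangements with one pattern injectively to those with another. *)
lemma yfibre_pattern_card_le:
  assumes K: "finite K" "2 \<le> card K"
    and t': "t' \<in> permutations_of_set {0..<ip - 1} \<times> permutations_of_set {0..<iq - ip - 1}
              \<times> permutations_of_set {0..<card K - iq}"
  shows "card {xs \<in> yfibre K ip iq. pattern ip iq xs = t} \<le> card {xs \<in> yfibre K ip iq. pattern ip iq xs = t'}"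
proof (cases "{xs \<in> yfibre K ip iq. pattern ip iq xs = t} = {}")
  case True
  then show ?thesis by (metis card.empty le0)
next
  case False
  then obtain xs0 where xs0: "xs0 \<in> yfibre K ip iq" "pattern ip iq xs0 = t" by blast
  obtain p q where pv: "pivots xs0 = (p, q)" by fastforce
  obtain \<sigma> where \<sigma>: "\<sigma> permutes K" "respects_pivots p q \<sigma>" "\<sigma> p = p" "\<sigma> q = q"
    and t'_eq: "pattern ip iq (map \<sigma> xs0) = t'"
    using yfibre_relabel_to_pattern[OF K xs0(1) pv, of "fst t'" "fst (snd t')" "snd (snd t')"] t' by auto
  have "map \<sigma> xs \<in> {xs \<in> yfibre K ip iq. pattern ip iq xs = t'}"
    if xs: "xs \<in> yfibre K ip iq" "pattern ip iq xs = t" for xs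
  proof -
    have "pivots xs = (p, q)" using yfibre_pivots[OF K xs(1) xs0(1)] pv by simp
    moreover have "subarrays (fst (ypart_list xs)) ip iq = subarrays (fst (ypart_list xs0)) ip iq"
      using yfibre_pattern_inj[OF K xs(1) xs0(1)] xs(2) xs0(2) by simp
    ultimately show ?thesis
      using yfibre_relabel[OF K(2) xs(1) _ \<sigma>] yfibre_relabel(2)[OF K(2) xs0(1) pv \<sigma>] t'_eq
      by (metis (mono_tags, lifting) mem_Collect_eq prod_cases3)
  qed
  moreover have "inj_on (map \<sigma>) {xs \<in> yfibre K ip iq. pattern ip iq xs = t}"
    using inj_mapI[OF permutes_inj[OF \<sigma>(1)]] by (simp add: inj_on_def inj_def)
  moreover have "finite (yfibre K ip iq)" unfolding yfibre_def by simp
  ultimately show ?thesis by (intro card_inj_on_le) auto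
qed

section \<open>Uniform distributions\<close>

lemma cond_pmf_of_set:
  assumes "finite P" "P \<inter> S \<noteq> {}"
  shows "cond_pmf (pmf_of_set P) S = pmf_of_set (P \<inter> S)"
proof -
  have P: "P \<noteq> {}" using assms by auto
  have ne: "set_pmf (pmf_of_set P) \<inter> S \<noteq> {}" using assms P by simp
  show ?thesis
  proof (rule pmf_eqI)
    fix x
    have m: "measure (measure_pmf (pmf_of_set P)) S = real (card (P \<inter> S)) / real (card P)"
      using measure_pmf_of_set[OF P assms(1)] by simp
    have c: "card (P \<inter> S) > 0" using assms by (simp add: card_gt_0_iff)
    have cP: "card P > 0" using assms P by (simp add: card_gt_0_iff)
    show "pmf (cond_pmf (pmf_of_set P) S) x = pmf (pmf_of_set (P \<inter> S)) x"
      unfolding pmf_cond[OF ne] m using assms P c cP by (auto simp: indicator_def)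
  qed
qed

(* The image of a uniform distribution is uniform on T if all fibres over T have equal size.
   It suffices to compare fibres in one direction, since the hypothesis is symmetric in t, t'. *)
lemma uniform_from_fibers:
  assumes fS: "finite S" and fT: "finite T" and ne: "S \<noteq> {}" and img: "f ` S \<subseteq> T"
    and fib: "\<And>t t'. t \<in> T \<Longrightarrow> t' \<in> T \<Longrightarrow> card {x \<in> S. f x = t} \<le> card {x \<in> S. f x = t'}"
  shows "map_pmf f (pmf_of_set S) = pmf_of_set T"
proof -
  obtain x0 where x0: "x0 \<in> S" using ne by auto
  define c where "c = card {x \<in> S. f x = f x0}"
  have t0: "f x0 \<in> T" using img x0 by auto
  have cc: "card {x \<in> S. f x = t} = c" if "t \<in> T" for t
    unfolding c_def using fib[OF that t0] fib[OF t0 that] by simp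
  have cpos: "c > 0" unfolding c_def using x0 fS by (subst card_gt_0_iff) auto
  have Sun: "S = (\<Union>t\<in>T. {x \<in> S. f x = t})" using img by auto
  have "card S = (\<Sum>t\<in>T. card {x \<in> S. f x = t})"
    by (subst Sun, rule card_UN_disjoint) (use fT fS in auto)
  also have "\<dots> = card T * c" using cc by simp
  finally have cS: "card S = card T * c" .
  have Tne: "T \<noteq> {}" using t0 by auto
  show ?thesis
  proof (rule pmf_eqI)
    fix t
    have "pmf (map_pmf f (pmf_of_set S)) t = real (card (S \<inter> f -` {t})) / real (card S)"
      unfolding pmf_map using measure_pmf_of_set[OF ne fS] by simp
    also have "\<dots> = indicator T t / real (card T)"
    proof (cases "t \<in> T")
      case True
      have "S \<inter> f -` {t} = {x \<in> S. f x = t}" by auto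
      then show ?thesis using cc[OF True] cS cpos True by (simp add: indicator_def)
    next
      case False
      then have "S \<inter> f -` {t} = {}" using img by auto
      then show ?thesis using False by (simp add: indicator_def)
    qed
    also have "\<dots> = pmf (pmf_of_set T) t" using Tne fT by simp
    finally show "pmf (map_pmf f (pmf_of_set S)) t = pmf (pmf_of_set T) t" .
  qed
qed

theorem lemma4p1:
  fixes K :: "'a::linorder set" and n ip iq :: nat
  assumes "finite K" and "card K = n" and "n \<ge> 2"
    and "\<exists>xs \<in> permutations_of_set K. snd (ypart_list xs) = (ip, iq)"
  shows "map_pmf (\<lambda>xs. let (ys, _) = ypart_list xs; (a, b, c) = subarrays ys ip iq
                       in (rel_order a, rel_order b, rel_order c))
           (cond_pmf (pmf_of_set (permutations_of_set K))
                     {xs. snd (ypart_list xs) = (ip, iq)})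
         = pmf_of_set (permutations_of_set {0..<ip - 1}
                        \<times> permutations_of_set {0..<iq - ip - 1}
                        \<times> permutations_of_set {0..<n - iq})"
proof -
  let ?T = "permutations_of_set {0..<ip - 1} \<times> permutations_of_set {0..<iq - ip - 1}
    \<times> permutations_of_set {0..<n - iq}"
  have K: "finite K" "2 \<le> card K" using assms(1-3) by simp_all
  have nonempty: "yfibre K ip iq \<noteq> {}" using assms(4) unfolding yfibre_def by blast
  have cond: "cond_pmf (pmf_of_set (permutations_of_set K)) {xs. snd (ypart_list xs) = (ip, iq)}
      = pmf_of_set (yfibre K ip iq)"
    using cond_pmf_of_set[of "permutations_of_set K" "{xs. snd (ypart_list xs) = (ip, iq)}"] nonempty
    unfolding yfibre_def by (simp add: Int_def)
  have pat: "(\<lambda>xs. let (ys, _) = ypart_list xs; (a, b, c) = subarrays ys ip iq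
                       in (rel_order a, rel_order b, rel_order c)) = pattern ip iq"
    by (auto simp: fun_eq_iff pattern_def split: prod.splits)
  have "map_pmf (pattern ip iq) (pmf_of_set (yfibre K ip iq)) = pmf_of_set ?T"
  proof (rule uniform_from_fibers)
    show "finite (yfibre K ip iq)" unfolding yfibre_def by simp
    show "pattern ip iq ` yfibre K ip iq \<subseteq> ?T" using yfibre_pattern[OF K(2)] assms(2) by blast
    show "card {xs \<in> yfibre K ip iq. pattern ip iq xs = t} \<le> card {xs \<in> yfibre K ip iq. pattern ip iq xs = t'}"
      if "t' \<in> ?T" for t t' using yfibre_pattern_card_le[OF K, of t'] that assms(2) by simp
  qed (use nonempty in simp_all)
  then show ?thesis unfolding cond pat .
qed

end
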